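(* For every graph $G$ and every $c\in[\frac12,1)$, $\mathrm{bn}(G)\le \frac{1}{1-c}\,\mathrm{sep}^*_c(G)$.
   Context: Two subgraphs $A,B$ of $G$ touch if they share a vertex or some edge of $G$ has one endpoint in $A$ and the other in $B$. A bramble is a set of connected subgraphs of $G$ that pairwise touch; a hitting set of a bramble is a set of vertices meeting every element; the order of a bramble is the minimum size of a hitting set; the bramble number $\mathrm{bn}(G)$ is the maximum order of a bramble in $G$. For $S\subseteq V(G)$ and $c\in[\frac12,1)$, a $(k,S,c)^*$-separator is a set $X\subseteq V(G)$ with $|X|\le k$ such that no component of $G-X$ contains more than $c|S|$ vertices of $S\setminus X$. $\mathrm{sep}^*_c(G)$ is the minimum integer $k$ such that $G$ has a $(k,S,c)^*$-separator for every $S\subseteq V(G)$. *)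

theory Defs
  imports Complex_Main
begin

definition graph :: "'a set \<Rightarrow> 'a set set \<Rightarrow> bool" where
  "graph V E \<longleftrightarrow> finite V \<and> (\<forall>e\<in>E. \<exists>u v. e = {u, v} \<and> u \<noteq> v \<and> u \<in> V \<and> v \<in> V)"

definition subgraph :: "'a set \<Rightarrow> 'a set set \<Rightarrow> 'a set \<Rightarrow> 'a set set \<Rightarrow> bool" where
  "subgraph VH EH V E \<longleftrightarrow> VH \<subseteq> V \<and> EH \<subseteq> E \<and> (\<forall>e\<in>EH. e \<subseteq> VH)"

definition connected_graph :: "'a set \<Rightarrow> 'a set set \<Rightarrow> bool" where
  "connected_graph V E \<longleftrightarrow> V \<noteq> {} \<and>
     (\<forall>u\<in>V. \<forall>v\<in>V. (\<lambda>x y. {x, y} \<in> E)\<^sup>*\<^sup>* u v)"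

definition touch :: "'a set set \<Rightarrow> 'a set \<times> 'a set set \<Rightarrow> 'a set \<times> 'a set set \<Rightarrow> bool" where
  "touch E A B \<longleftrightarrow> fst A \<inter> fst B \<noteq> {} \<or> (\<exists>a\<in>fst A. \<exists>b\<in>fst B. {a, b} \<in> E)"

definition bramble :: "'a set \<Rightarrow> 'a set set \<Rightarrow> ('a set \<times> 'a set set) set \<Rightarrow> bool" where
  "bramble V E \<B> \<longleftrightarrow>
     (\<forall>H\<in>\<B>. subgraph (fst H) (snd H) V E \<and> connected_graph (fst H) (snd H)) \<and>
     (\<forall>A\<in>\<B>. \<forall>B\<in>\<B>. touch E A B)"

definition hitting_set :: "'a set \<Rightarrow> ('a set \<times> 'a set set) set \<Rightarrow> 'a set \<Rightarrow> bool" where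
  "hitting_set V \<B> X \<longleftrightarrow> X \<subseteq> V \<and> (\<forall>H\<in>\<B>. X \<inter> fst H \<noteq> {})"

definition bramble_order :: "'a set \<Rightarrow> ('a set \<times> 'a set set) set \<Rightarrow> nat" where
  "bramble_order V \<B> = Min {card X | X. hitting_set V \<B> X}"

definition bramble_number :: "'a set \<Rightarrow> 'a set set \<Rightarrow> nat" where
  "bramble_number V E = Max {bramble_order V \<B> | \<B>. bramble V E \<B>}"

definition reach_minus :: "'a set \<Rightarrow> 'a set set \<Rightarrow> 'a set \<Rightarrow> 'a \<Rightarrow> 'a \<Rightarrow> bool" where
  "reach_minus V E X = (\<lambda>x y. x \<in> V - X \<and> y \<in> V - X \<and> {x, y} \<in> E)\<^sup>*\<^sup>*"

definition component_minus :: "'a set \<Rightarrow> 'a set set \<Rightarrow> 'a set \<Rightarrow> 'a \<Rightarrow> 'a set" where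
  "component_minus V E X v = {u. reach_minus V E X v u}"

definition star_separator :: "'a set \<Rightarrow> 'a set set \<Rightarrow> nat \<Rightarrow> 'a set \<Rightarrow> real \<Rightarrow> 'a set \<Rightarrow> bool" where
  "star_separator V E k S c X \<longleftrightarrow> X \<subseteq> V \<and> card X \<le> k \<and>
     (\<forall>v\<in>V - X. real (card (component_minus V E X v \<inter> (S - X))) \<le> c * real (card S))"

definition sep_star :: "'a set \<Rightarrow> 'a set set \<Rightarrow> real \<Rightarrow> nat" where
  "sep_star V E c = (LEAST k. \<forall>S. S \<subseteq> V \<longrightarrow> (\<exists>X. star_separator V E k S c X))"

end

theory Submission
  imports Defs
begin

text \<open>Take a bramble of maximum order and a minimum hitting set S of it, and let X be a
  (k, S, c)*-separator with k = sep*_c(G). Either X itself hits the bramble, or some element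
  avoids X; then all elements avoiding X touch it and so lie in its component C of G - X.
  Hence X together with the at most c|S| vertices of S in C is a hitting set, and
  |S| \<le> k + c|S|, i.e. (1 - c) |S| \<le> k.\<close>

lemma graph_edges_subset_Pow: "graph V E \<Longrightarrow> E \<subseteq> Pow V"
  unfolding graph_def by auto

lemma finite_brambles:
  assumes "graph V E"
  shows "finite {\<B>. bramble V E \<B>}"
proof -
  have fin_V: "finite V" using assms unfolding graph_def by blast
  then have fin_E: "finite E"
    using graph_edges_subset_Pow[OF assms] by (meson finite_Pow_iff finite_subset)
  have "{\<B>. bramble V E \<B>} \<subseteq> Pow (Pow V \<times> Pow E)"
    unfolding bramble_def subgraph_def by (auto simp: mem_Times_iff; metis fst_conv snd_conv subsetD)
  then show ?thesis by (rule finite_subset) (simp add: fin_V fin_E)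
qed

lemma bramble_number_attained:
  assumes "graph V E"
  obtains \<B> where "bramble V E \<B>" and "bramble_number V E = bramble_order V \<B>"
proof -
  let ?orders = "{bramble_order V \<B> | \<B>. bramble V E \<B>}"
  have "?orders = bramble_order V ` {\<B>. bramble V E \<B>}" by auto
  then have "finite ?orders" using finite_brambles[OF assms] by simp
  moreover have "bramble V E {}" unfolding bramble_def by simp
  then have "?orders \<noteq> {}" by blast
  ultimately have "bramble_number V E \<in> ?orders"
    unfolding bramble_number_def by (rule Max_in)
  then show ?thesis using that by blast
qed

lemma finite_hitting_set_cards:
  "finite V \<Longrightarrow> finite {card X | X. hitting_set V \<B> X}"
  by (rule finite_subset[of _ "{0..card V}"])
    (auto simp: hitting_set_def intro: card_mono)

lemma bramble_order_le_card:
  "finite V \<Longrightarrow> hitting_set V \<B> Y \<Longrightarrow> bramble_order V \<B> \<le> card Y"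
  unfolding bramble_order_def using Min_le[OF finite_hitting_set_cards] by blast

lemma bramble_order_attained:
  assumes "finite V" and "bramble V E \<B>"
  obtains S where "hitting_set V \<B> S" and "card S = bramble_order V \<B>"
proof -
  have "hitting_set V \<B> V"
    using assms(2) unfolding hitting_set_def bramble_def subgraph_def connected_graph_def
    by blast
  then have "{card X | X. hitting_set V \<B> X} \<noteq> {}" by blast
  then have "bramble_order V \<B> \<in> {card X | X. hitting_set V \<B> X}"
    unfolding bramble_order_def by (rule Min_in[OF finite_hitting_set_cards[OF assms(1)]])
  then show ?thesis using that by auto
qed

lemma star_separator_sep_star:
  assumes "finite V" and "S \<subseteq> V"
  obtains X where "star_separator V E (sep_star V E c) S c X"
proof -
  have "\<forall>S. S \<subseteq> V \<longrightarrow> (\<exists>X. star_separator V E (card V) S c X)"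
    unfolding star_separator_def by auto
  then have "\<forall>S. S \<subseteq> V \<longrightarrow> (\<exists>X. star_separator V E (sep_star V E c) S c X)"
    unfolding sep_star_def by (rule LeastI)
  then show ?thesis using assms(2) that by blast
qed

lemma reach_minus_connected_subgraph:
  assumes "subgraph (fst H) (snd H) V E" and "connected_graph (fst H) (snd H)"
    and "X \<inter> fst H = {}" and "u \<in> fst H" and "w \<in> fst H"
  shows "reach_minus V E X u w"
proof -
  have "(\<lambda>x y. {x, y} \<in> snd H)\<^sup>*\<^sup>* u w"
    using assms(2,4,5) unfolding connected_graph_def by blast
  moreover have "(\<lambda>x y. {x, y} \<in> snd H) \<le> (\<lambda>x y. x \<in> V - X \<and> y \<in> V - X \<and> {x, y} \<in> E)"
    using assms(1,3) unfolding subgraph_def by blast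
  ultimately show ?thesis unfolding reach_minus_def using rtranclp_mono by blast
qed

lemma bramble_avoiding_subset_component:
  assumes "bramble V E \<B>" and "H \<in> \<B>" and "H' \<in> \<B>"
    and "X \<inter> fst H = {}" and "X \<inter> fst H' = {}" and "v \<in> fst H"
  shows "fst H' \<subseteq> component_minus V E X v"
proof
  fix w assume w: "w \<in> fst H'"
  have H: "subgraph (fst H) (snd H) V E" "connected_graph (fst H) (snd H)"
    and H': "subgraph (fst H') (snd H') V E" "connected_graph (fst H') (snd H')"
    using assms(1-3) unfolding bramble_def by auto
  note reach_H = reach_minus_connected_subgraph[OF H assms(4)]
    and reach_H' = reach_minus_connected_subgraph[OF H' assms(5)]
  have "touch E H H'" using assms(1-3) unfolding bramble_def by blast
  then have "reach_minus V E X v w"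
    unfolding touch_def
  proof
    assume "fst H \<inter> fst H' \<noteq> {}"
    then obtain a where "a \<in> fst H" "a \<in> fst H'" by blast
    then show ?thesis
      using reach_H[OF assms(6)] reach_H'[OF _ w] unfolding reach_minus_def
      by (meson rtranclp_trans)
  next
    assume "\<exists>a\<in>fst H. \<exists>b\<in>fst H'. {a, b} \<in> E"
    then obtain a b where ab: "a \<in> fst H" "b \<in> fst H'" "{a, b} \<in> E" by blast
    then have "a \<in> V - X" "b \<in> V - X"
      using H(1) H'(1) assms(4,5) unfolding subgraph_def by blast+
    with ab(3) have "reach_minus V E X a b" unfolding reach_minus_def by auto
    then show ?thesis
      using reach_H[OF assms(6) ab(1)] reach_H'[OF ab(2) w] unfolding reach_minus_def
      by (meson rtranclp_trans)
  qed
  then show "w \<in> component_minus V E X v" unfolding component_minus_def by simp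
qed

lemma bramble_order_le_separator:
  assumes "finite V" and "bramble V E \<B>" and "hitting_set V \<B> S" and "X \<subseteq> V"
  shows "bramble_order V \<B> \<le> card X
    \<or> (\<exists>v\<in>V - X. bramble_order V \<B> \<le> card X + card (component_minus V E X v \<inter> (S - X)))"
proof (cases "\<forall>H\<in>\<B>. X \<inter> fst H \<noteq> {}")
  case True
  then have "hitting_set V \<B> X" using assms(4) unfolding hitting_set_def by blast
  then show ?thesis using bramble_order_le_card[OF assms(1)] by blast
next
  case False
  then obtain H where H: "H \<in> \<B>" "X \<inter> fst H = {}" by blast
  then have "fst H \<noteq> {}" "fst H \<subseteq> V"
    using assms(2) unfolding bramble_def connected_graph_def subgraph_def by auto
  then obtain v where v: "v \<in> fst H" "v \<in> V - X" using H(2) by blast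
  define Y where "Y = X \<union> (component_minus V E X v \<inter> (S - X))"
  have "hitting_set V \<B> Y"
    using assms(3,4) bramble_avoiding_subset_component[OF assms(2) H(1) _ H(2) _ v(1)]
    unfolding hitting_set_def Y_def by blast
  then have "bramble_order V \<B> \<le> card Y" by (rule bramble_order_le_card[OF assms(1)])
  also have "\<dots> \<le> card X + card (component_minus V E X v \<inter> (S - X))"
    unfolding Y_def by (rule card_Un_le)
  finally show ?thesis using v(2) by blast
qed

lemma bramble_order_le_sep_star:
  assumes "finite V" and "bramble V E \<B>" and "0 \<le> c"
  shows "(1 - c) * real (bramble_order V \<B>) \<le> real (sep_star V E c)"
proof -
  obtain S where S: "hitting_set V \<B> S" and card_S: "card S = bramble_order V \<B>"
    using bramble_order_attained[OF assms(1,2)] .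
  then obtain X where "star_separator V E (sep_star V E c) S c X"
    using star_separator_sep_star[OF assms(1)] unfolding hitting_set_def by blast
  then have X: "X \<subseteq> V" "card X \<le> sep_star V E c"
    and component: "\<And>v. v \<in> V - X \<Longrightarrow>
      real (card (component_minus V E X v \<inter> (S - X))) \<le> c * real (card S)"
    unfolding star_separator_def by auto
  have "(1 - c) * real (bramble_order V \<B>) = real (card S) - c * real (card S)"
    using card_S by (simp add: left_diff_distrib)
  moreover have "0 \<le> c * real (card S)" using assms(3) by simp
  ultimately show ?thesis
    using bramble_order_le_separator[OF assms(1,2) S X(1)] X(2) component card_S
    by (smt (verit) of_nat_add of_nat_mono)
qed

theorem lemma8:
  fixes V :: "'a set" and E :: "'a set set" and c :: real
  assumes "graph V E" and "1/2 \<le> c" and "c < 1"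
  shows "real (bramble_number V E) \<le> (1 / (1 - c)) * real (sep_star V E c)"
proof -
  obtain \<B> where \<B>: "bramble V E \<B>" and bn: "bramble_number V E = bramble_order V \<B>"
    using bramble_number_attained[OF assms(1)] .
  have "finite V" using assms(1) unfolding graph_def by blast
  then have "(1 - c) * real (bramble_number V E) \<le> real (sep_star V E c)"
    using bramble_order_le_sep_star[OF _ \<B>] assms(2) bn by simp
  then show ?thesis using assms(3) by (simp add: field_simps)
qed

end
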